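(* Let $\pi:E\to\mathbb{R}^k$ be a fiber bundle, $L:J^1\pi\to\mathbb{R}$ a Lagrangian and ${\bf X}=(X_1,\dots,X_k)$ a $k$-vector field on $J^1\pi$ such that $$dx^\alpha(X_\beta)=\delta^\alpha_\beta\quad(1\le\alpha,\beta\le k),\qquad \sum_{\alpha=1}^k i_{X_\alpha}\Omega^\alpha_L=(k-1)\,dL.$$ 1. If $L$ is regular, then ${\bf X}$ is a SOPDE; if moreover ${\bf X}$ is integrable and $\phi:U_0\subset\mathbb{R}^k\to E$ is a solution of ${\bf X}$, then $\phi$ is a solution to the Euler–Lagrange equations. 2. If ${\bf X}$ is integrable and $j^1\phi$ is an integral section of ${\bf X}$, then $\phi$ is a solution to the Euler–Lagrange equations. Here the Euler–Lagrange equations for a section $\phi$ of $\pi$ (locally $\phi(x)=(x,\phi^i(x))$) are $$\frac{\partial^2 L}{\partial x^\alpha\partial v^i_\alpha}\Big|_{j^1_x\phi}+\frac{\partial\phi^j}{\partial x^\alpha}\Big|_x\frac{\partial^2L}{\partial q^j\partial v^i_\alpha}\Big|_{j^1_x\phi}+\frac{\partial^2\phi^j}{\partial x^\alpha\partial x^\beta}\Big|_x\frac{\partial^2L}{\partial v^j_\beta\partial v^i_\alpha}\Big|_{j^1_x\phi}=\frac{\partial L}{\partial q^i}\Big|_{j^1_x\phi},\quad i=1,\dots,n.$$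
   Context: $E$ is $(n+k)$-dimensional with adapted coordinates $(x^\alpha,q^i)$, $1\le\alpha\le k$, $1\le i\le n$; $J^1\pi$ has induced coordinates $(x^\alpha,q^i,v^i_\alpha)$; summation over repeated indices. The Poincaré–Cartan $1$-forms are locally $\Theta^\alpha_L=\frac{\partial L}{\partial v^i_\alpha}(dq^i-v^i_\beta dx^\beta)+L\,dx^\alpha$ (intrinsically $L\,dx^\alpha+dL\circ S^\alpha$ with $S^\alpha=(dq^i-v^i_\beta dx^\beta)\otimes\partial/\partial v^i_\alpha$), and $\Omega^\alpha_L=-d\Theta^\alpha_L$. $L$ is regular if the $nk\times nk$ matrix $\big(\partial^2L/\partial v^j_\alpha\partial v^i_\beta\big)$ is nonsingular. A SOPDE is a $k$-vector field on $J^1\pi$ with $dx^\alpha(X_\beta)=\delta^\alpha_\beta$ and $(dq^i-v^i_\gamma dx^\gamma)(X_\beta)=0$. An integral section of ${\bf X}$ is a map $\psi:U\subset\mathbb{R}^k\to J^1\pi$ with $\psi_*(x)(\partial/\partial x^\alpha|_x)=X_\alpha(\psi(x))$; ${\bf X}$ is integrable if there is an integral section through every point (the paper also assumes $[X_\alpha,X_\beta]=0$). A section $\phi$ of $\pi$ is a solution of a SOPDE ${\bf X}$ if $j^1\phi$ is an integral section of ${\bf X}$. *)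

theory Defs
  imports "HOL-Analysis.Analysis"
begin

text \<open>Local coordinates on J^1 pi: a point is ((x, q), v) with x in R^k, q in R^n,
  v in R^(n x k), where (v $ i) $ alpha = v^i_alpha.\<close>
type_synonym ('k, 'n) jet = "((real^'k) \<times> (real^'n)) \<times> (real^'k^'n)"

definition jx :: "('k::finite, 'n::finite) jet \<Rightarrow> real^'k" where "jx p = fst (fst p)"
definition jq :: "('k::finite, 'n::finite) jet \<Rightarrow> real^'n" where "jq p = snd (fst p)"
definition jv :: "('k::finite, 'n::finite) jet \<Rightarrow> real^'k^'n" where "jv p = snd p"

definition dX :: "'k \<Rightarrow> ('k::finite, 'n::finite) jet" where "dX a = ((axis a 1, 0), 0)"
definition dQ :: "'n \<Rightarrow> ('k::finite, 'n::finite) jet" where "dQ i = ((0, axis i 1), 0)"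
definition dV :: "'n \<Rightarrow> 'k \<Rightarrow> ('k::finite, 'n::finite) jet" where "dV i a = ((0, 0), axis i (axis a 1))"

definition pd :: "('a::real_normed_vector \<Rightarrow> 'b::real_normed_vector) \<Rightarrow> 'a \<Rightarrow> 'a \<Rightarrow> 'b" where
  "pd f p u = frechet_derivative f (at p) u"
definition pd2 :: "('a::real_normed_vector \<Rightarrow> 'b::real_normed_vector) \<Rightarrow> 'a \<Rightarrow> 'a \<Rightarrow> 'a \<Rightarrow> 'b" where
  "pd2 f p u w = frechet_derivative (\<lambda>y. frechet_derivative f (at y) w) (at p) u"

fun C_on :: "nat \<Rightarrow> 'a::real_normed_vector set \<Rightarrow> ('a \<Rightarrow> 'b::real_normed_vector) \<Rightarrow> bool" where
  "C_on 0 S f = continuous_on S f"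
| "C_on (Suc m) S f = (f differentiable_on S \<and> (\<forall>u. C_on m S (\<lambda>p. frechet_derivative f (at p) u)))"

definition smooth_on :: "'a::real_normed_vector set \<Rightarrow> ('a \<Rightarrow> 'b::real_normed_vector) \<Rightarrow> bool" where
  "smooth_on S f = (\<forall>m. C_on m S f)"

text \<open>Vertical endomorphisms S^alpha = (dq^i - v^i_beta dx^beta) (x) d/dv^i_alpha at p, applied to w.\<close>
definition Sendo :: "'k \<Rightarrow> ('k::finite, 'n::finite) jet \<Rightarrow> ('k, 'n) jet \<Rightarrow> ('k, 'n) jet" where
  "Sendo a p w = ((0, 0), \<chi> i. \<chi> b. if b = a then jq w $ i - (\<Sum>c\<in>UNIV. jv p $ i $ c * jx w $ c) else 0)"

definition Theta :: "(('k::finite, 'n::finite) jet \<Rightarrow> real) \<Rightarrow> 'k \<Rightarrow> ('k, 'n) jet \<Rightarrow> ('k, 'n) jet \<Rightarrow> real" where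
  "Theta L a p w = pd L p (Sendo a p w) + L p * jx w $ a"

text \<open>Exterior derivative of a 1-form on a vector space: d theta(Y,Z) = Y(theta Z) - Z(theta Y)
  for constant vector fields Y, Z.\<close>
definition dform :: "('a::real_normed_vector \<Rightarrow> 'a \<Rightarrow> real) \<Rightarrow> 'a \<Rightarrow> 'a \<Rightarrow> 'a \<Rightarrow> real" where
  "dform \<theta> p Y Z = frechet_derivative (\<lambda>y. \<theta> y Z) (at p) Y - frechet_derivative (\<lambda>y. \<theta> y Y) (at p) Z"

definition Omega :: "(('k::finite, 'n::finite) jet \<Rightarrow> real) \<Rightarrow> 'k \<Rightarrow> ('k, 'n) jet \<Rightarrow> ('k, 'n) jet \<Rightarrow> ('k, 'n) jet \<Rightarrow> real" where
  "Omega L a p Y Z = - dform (Theta L a) p Y Z"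

definition regular_at :: "(('k::finite, 'n::finite) jet \<Rightarrow> real) \<Rightarrow> ('k, 'n) jet \<Rightarrow> bool" where
  "regular_at L p = (det ((\<chi> ja. \<chi> ib. pd2 L p (dV (fst ja) (snd ja)) (dV (fst ib) (snd ib)))
        :: real^('n \<times> 'k)^('n \<times> 'k)) \<noteq> 0)"

definition SOPDE_on :: "('k::finite, 'n::finite) jet set \<Rightarrow> ('k \<Rightarrow> ('k, 'n) jet \<Rightarrow> ('k, 'n) jet) \<Rightarrow> bool" where
  "SOPDE_on W X = (\<forall>p\<in>W. \<forall>b.
      (\<forall>a. jx (X b p) $ a = (if a = b then 1 else 0)) \<and>
      (\<forall>i. jq (X b p) $ i - (\<Sum>c\<in>UNIV. jv p $ i $ c * jx (X b p) $ c) = 0))"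

definition integral_section :: "('k \<Rightarrow> ('k::finite, 'n::finite) jet \<Rightarrow> ('k, 'n) jet) \<Rightarrow> (real^'k) set \<Rightarrow> (real^'k \<Rightarrow> ('k, 'n) jet) \<Rightarrow> bool" where
  "integral_section X U \<psi> = (open U \<and> (\<forall>x\<in>U. \<psi> differentiable (at x) \<and>
      (\<forall>a. frechet_derivative \<psi> (at x) (axis a 1) = X a (\<psi> x))))"

definition kvf_integrable :: "('k::finite, 'n::finite) jet set \<Rightarrow> ('k \<Rightarrow> ('k, 'n) jet \<Rightarrow> ('k, 'n) jet) \<Rightarrow> bool" where
  "kvf_integrable W X = (\<forall>p\<in>W. \<exists>U \<psi> x0. integral_section X U \<psi> \<and> \<psi> ` U \<subseteq> W \<and> x0 \<in> U \<and> \<psi> x0 = p)"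

definition j1 :: "(real^'k \<Rightarrow> real^'n) \<Rightarrow> real^'k \<Rightarrow> ('k::finite, 'n::finite) jet" where
  "j1 \<phi> x = ((x, \<phi> x), \<chi> i. \<chi> a. pd \<phi> x (axis a 1) $ i)"

definition solution_of :: "('k::finite, 'n::finite) jet set \<Rightarrow> ('k \<Rightarrow> ('k, 'n) jet \<Rightarrow> ('k, 'n) jet) \<Rightarrow> (real^'k) set \<Rightarrow> (real^'k \<Rightarrow> real^'n) \<Rightarrow> bool" where
  "solution_of W X U \<phi> = (integral_section X U (j1 \<phi>) \<and> j1 \<phi> ` U \<subseteq> W)"

definition euler_lagrange :: "(('k::finite, 'n::finite) jet \<Rightarrow> real) \<Rightarrow> (real^'k) set \<Rightarrow> (real^'k \<Rightarrow> real^'n) \<Rightarrow> bool" where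
  "euler_lagrange L U \<phi> = (\<forall>x\<in>U. \<forall>i.
      (\<Sum>a\<in>UNIV. pd2 L (j1 \<phi> x) (dX a) (dV i a))
    + (\<Sum>a\<in>UNIV. \<Sum>j\<in>UNIV. pd \<phi> x (axis a 1) $ j * pd2 L (j1 \<phi> x) (dQ j) (dV i a))
    + (\<Sum>a\<in>UNIV. \<Sum>b\<in>UNIV. \<Sum>j\<in>UNIV. pd2 \<phi> x (axis a 1) (axis b 1) $ j * pd2 L (j1 \<phi> x) (dV j b) (dV i a))
    = pd L (j1 \<phi> x) (dQ i))"

end

theory Submission
  imports Defs
begin

text \<open>
  Write \<open>\<theta>\<^sup>i = dq\<^sup>i - v\<^sup>i\<^sub>c dx\<^sup>c\<close> for the contact forms, so that
  \<open>\<Theta>\<^sup>a\<^sub>L = (\<partial>L/\<partial>v\<^sup>i\<^sub>a) \<theta>\<^sup>i + L dx\<^sup>a\<close>. For a \<open>k\<close>-vector field with \<open>dx\<^sup>c(X\<^sub>a) = \<delta>\<^sup>c\<^sub>a\<close>,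
  a direct computation of \<open>\<Sigma>\<^sub>a i\<^bsub>X\<^sub>a\<^esub>\<Omega>\<^sup>a\<^sub>L\<close> shows that the defining equation, tested on the
  vertical vectors \<open>\<partial>/\<partial>v\<^sup>j\<^sub>b\<close>, says that the Hessian of \<open>L\<close> in the velocities annihilates
  the vector \<open>(\<theta>\<^sup>i(X\<^sub>a))\<close>; for regular \<open>L\<close> this forces \<open>\<theta>\<^sup>i(X\<^sub>a) = 0\<close>, i.e. \<open>X\<close> is a SOPDE.
  Tested on \<open>\<partial>/\<partial>q\<^sup>j\<close> and using \<open>\<theta>\<^sup>i(X\<^sub>a) = 0\<close>, it reads
  \<open>\<Sigma>\<^sub>a X\<^sub>a(\<partial>L/\<partial>v\<^sup>j\<^sub>a) = \<partial>L/\<partial>q\<^sup>j\<close>. Along an integral section \<open>j\<^sup>1\<phi>\<close> the contact condition holds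
  automatically, and \<open>X\<^sub>a = \<partial>(j\<^sup>1\<phi>)/\<partial>x\<^sup>a\<close>, so this identity is exactly the Euler--Lagrange equation.
\<close>

lemma jet_coordinate_simps [simp]:
  "jx (dV i a) = 0" "jq (dV i a) = 0" "jv (dV i a) $ j $ c = (if j = i \<and> c = a then 1 else 0)"
  "jx (dQ i) = 0" "jq (dQ i) $ j = (if j = i then 1 else 0)" "jv (dQ i) = 0"
  "jx (dX a) $ b = (if b = a then 1 else 0)" "jq (dX a) = 0" "jv (dX a) = 0"
  by (auto simp: jx_def jq_def jv_def dV_def dQ_def dX_def axis_def)

lemma jet_coordinates_linear [simp]:
  "jx (u + w) = jx u + jx w" "jq (u + w) = jq u + jq w" "jv (u + w) = jv u + jv w"
  "jx (c *\<^sub>R u) = c *\<^sub>R jx u" "jq (c *\<^sub>R u) = c *\<^sub>R jq u" "jv (c *\<^sub>R u) = c *\<^sub>R jv u"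
  "jx (sum f S) = (\<Sum>s\<in>S. jx (f s))" "jq (sum f S) = (\<Sum>s\<in>S. jq (f s))" "jv (sum f S) = (\<Sum>s\<in>S. jv (f s))"
  by (auto simp: jx_def jq_def jv_def fst_sum snd_sum)

lemma jet_eqI: "jx u = jx w \<Longrightarrow> jq u = jq w \<Longrightarrow> jv u = jv w \<Longrightarrow> u = w"
  by (simp add: jx_def jq_def jv_def prod_eq_iff)

lemma sum_sum_delta_pair:
  "(\<Sum>x\<in>(UNIV::'a::finite set). \<Sum>y\<in>(UNIV::'b::finite set). if i = y \<and> j = x then g y x else (0::real)) = g i j"
proof -
  have "(\<Sum>y\<in>UNIV. if i = y \<and> j = x then g y x else (0::real)) = (if x = j then g i x else 0)" for x
  proof -
    have "(\<Sum>y\<in>UNIV. if i = y \<and> j = x then g y x else (0::real))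
        = (\<Sum>y\<in>UNIV. if y = i then (if x = j then g y x else 0) else 0)"
      by (rule sum.cong) auto
    then show ?thesis by simp
  qed
  then show ?thesis by simp
qed

lemma jet_eq_coordinate_sum:
  "w = (\<Sum>b\<in>UNIV. jx w $ b *\<^sub>R dX b) + (\<Sum>i\<in>UNIV. jq w $ i *\<^sub>R dQ i)
     + (\<Sum>c\<in>UNIV. \<Sum>i\<in>UNIV. jv w $ i $ c *\<^sub>R dV i c)"
  by (rule jet_eqI) (simp_all add: vec_eq_iff if_distrib sum_sum_delta_pair cong: if_cong)

lemma linear_jet_coordinate_expansion:
  fixes l :: "('k::finite, 'n::finite) jet \<Rightarrow> real"
  assumes "linear l"
  shows "l w = (\<Sum>b\<in>UNIV. jx w $ b * l (dX b)) + (\<Sum>i\<in>UNIV. jq w $ i * l (dQ i))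
     + (\<Sum>c\<in>UNIV. \<Sum>i\<in>UNIV. jv w $ i $ c * l (dV i c))"
  by (subst jet_eq_coordinate_sum[of w])
     (simp add: linear_add[OF assms] linear_sum[OF assms] linear_scale[OF assms])

lemma linear_expansion_if_dx_eq_delta:
  fixes l :: "('k::finite, 'n::finite) jet \<Rightarrow> real"
  assumes "linear l" and dx: "\<forall>c. jx w $ c = (if c = a then 1 else 0)"
  shows "l w = l (dX a) + (\<Sum>i\<in>UNIV. jq w $ i * l (dQ i))
     + (\<Sum>c\<in>UNIV. \<Sum>i\<in>UNIV. jv w $ i $ c * l (dV i c))"
proof -
  have "(\<Sum>b\<in>UNIV. jx w $ b * l (dX b)) = (\<Sum>b\<in>UNIV. if b = a then l (dX b) else 0)"
    using dx by (intro sum.cong) simp_all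
  then show ?thesis using linear_jet_coordinate_expansion[OF \<open>linear l\<close>, of w] by simp
qed

lemma bounded_linear_jv_nth: "bounded_linear (\<lambda>y::('k::finite,'n::finite) jet. jv y $ i $ c)"
  unfolding jv_def
  by (intro bounded_linear_compose[OF bounded_linear_vec_nth] bounded_linear_snd)

lemma bounded_linear_jq: "bounded_linear (jq :: ('k::finite,'n::finite) jet \<Rightarrow> real^'n)"
  unfolding jq_def by (rule bounded_linear_compose[OF bounded_linear_snd bounded_linear_fst])

lemma bounded_linear_jv_column:
  "bounded_linear (\<lambda>w::('k::finite,'n::finite) jet. (\<chi> i. jv w $ i $ c) :: real^'n)"
proof -
  have "linear (\<lambda>w::('k,'n) jet. (\<chi> i. jv w $ i $ c) :: real^'n)"
    by (rule linearI) (simp_all add: vec_eq_iff)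
  then show ?thesis using linear_conv_bounded_linear by blast
qed

lemma smooth_on_differentiable:
  assumes "open W" "smooth_on W L" "y \<in> W"
  shows "L differentiable (at y)" "(\<lambda>z. pd L z u) differentiable (at y)"
proof -
  have "C_on 2 W L" using assms(2) unfolding smooth_on_def by blast
  then have "L differentiable_on W" "(\<lambda>z. pd L z u) differentiable_on W"
    by (auto simp: pd_def numeral_2_eq_2)
  then show "L differentiable (at y)" "(\<lambda>z. pd L z u) differentiable (at y)"
    using assms(1,3) differentiable_on_eq_differentiable_at by blast+
qed

definition contact :: "('k::finite, 'n::finite) jet \<Rightarrow> ('k, 'n) jet \<Rightarrow> 'n \<Rightarrow> real" where
  "contact p w i = jq w $ i - (\<Sum>c\<in>UNIV. jv p $ i $ c * jx w $ c)"

lemma Sendo_eq_sum: "Sendo a p w = (\<Sum>i\<in>UNIV. contact p w i *\<^sub>R dV i a)"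
  by (simp add: Sendo_def contact_def dV_def prod_eq_iff vec_eq_iff fst_sum snd_sum axis_def
      if_distrib cong: if_cong)

lemma Theta_eq_contact:
  assumes "L differentiable (at p)"
  shows "Theta L a p w = (\<Sum>i\<in>UNIV. pd L p (dV i a) * contact p w i) + L p * jx w $ a"
proof -
  have lin: "linear (pd L p)" unfolding pd_def using linear_frechet_derivative[OF assms] .
  show ?thesis unfolding Theta_def Sendo_eq_sum
    by (simp add: linear_sum[OF lin] linear_scale[OF lin] mult.commute)
qed

definition dTheta ::
  "(('k::finite, 'n::finite) jet \<Rightarrow> real) \<Rightarrow> 'k \<Rightarrow> ('k, 'n) jet \<Rightarrow> ('k, 'n) jet \<Rightarrow> ('k, 'n) jet \<Rightarrow> real"
where
  "dTheta L a p w A =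
     (\<Sum>i\<in>UNIV. pd2 L p A (dV i a) * contact p w i - pd L p (dV i a) * (\<Sum>c\<in>UNIV. jv A $ i $ c * jx w $ c))
     + pd L p A * jx w $ a"

lemma Theta_has_derivative:
  assumes W: "open W" "p \<in> W" and dL: "\<forall>y\<in>W. L differentiable (at y)"
    and dL2: "\<forall>u. (\<lambda>y. pd L y u) differentiable (at p)"
  shows "((\<lambda>y. Theta L a y w) has_derivative dTheta L a p w) (at p)"
proof -
  have dpd: "((\<lambda>y. pd L y (dV i a)) has_derivative (\<lambda>A. pd2 L p A (dV i a))) (at p)" for i
    using dL2 unfolding pd2_def frechet_derivative_works pd_def by blast
  have dL0: "(L has_derivative pd L p) (at p)"
    using dL W unfolding pd_def frechet_derivative_works by blast
  have dcontact: "((\<lambda>y. contact y w i) has_derivative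
      (\<lambda>A. - (\<Sum>c\<in>UNIV. jv A $ i $ c * jx w $ c))) (at p)" for i
    unfolding contact_def
    by (auto intro!: derivative_eq_intros bounded_linear_imp_has_derivative[OF bounded_linear_jv_nth]
        simp: sum_negf)
  have "dTheta L a p w = (\<lambda>A. (\<Sum>i\<in>UNIV. pd L p (dV i a) * - (\<Sum>c\<in>UNIV. jv A $ i $ c * jx w $ c)
      + pd2 L p A (dV i a) * contact p w i) + (L p * 0 + pd L p A * jx w $ a))"
    unfolding dTheta_def by (rule ext) (simp add: algebra_simps)
  then have "((\<lambda>y. (\<Sum>i\<in>UNIV. pd L y (dV i a) * contact y w i) + L y * jx w $ a)
          has_derivative dTheta L a p w) (at p)"
    using has_derivative_add[OF has_derivative_sum[OF has_derivative_mult[OF dpd dcontact]]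
                                has_derivative_mult[OF dL0 has_derivative_const]]
    by simp
  then show ?thesis
    by (rule has_derivative_transform_within_open[OF _ W])
       (simp add: Theta_eq_contact dL)
qed

lemma Omega_eq_dTheta:
  assumes "open W" "p \<in> W" "\<forall>y\<in>W. L differentiable (at y)"
    and "\<forall>u. (\<lambda>y. pd L y u) differentiable (at p)"
  shows "Omega L a p A B = dTheta L a p A B - dTheta L a p B A"
  using frechet_derivative_at[OF Theta_has_derivative[OF assms, of a A]]
        frechet_derivative_at[OF Theta_has_derivative[OF assms, of a B]]
  unfolding Omega_def dform_def by (metis minus_diff_eq)

lemma dTheta_dV: "dTheta L a p (dV j b) A = 0"
  by (simp add: dTheta_def contact_def)

lemma dTheta_dQ: "dTheta L a p (dQ j) A = pd2 L p A (dV j a)"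
proof -
  have "(\<Sum>i\<in>UNIV. pd2 L p A (dV i a) * (if i = j then 1 else 0))
      = (\<Sum>i\<in>UNIV. if i = j then pd2 L p A (dV i a) else 0)"
    by (rule sum.cong) auto
  then show ?thesis by (simp add: dTheta_def contact_def)
qed

lemma dTheta_horizontal_dV:
  assumes "\<forall>c. jx B $ c = (if c = a then 1 else 0)"
  shows "dTheta L a p B (dV j b) = (\<Sum>i\<in>UNIV. pd2 L p (dV j b) (dV i a) * contact p B i)
     - (if b = a then pd L p (dV j a) else 0) + pd L p (dV j b)"
proof -
  have "(\<Sum>c\<in>UNIV. jv (dV j b) $ i $ c * jx B $ c) = (if i = j \<and> b = a then 1 else 0)" for i
  proof -
    have "(\<Sum>c\<in>UNIV. jv (dV j b) $ i $ c * jx B $ c)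
        = (\<Sum>c\<in>UNIV. if c = b then (if i = j then jx B $ c else 0) else 0)"
      by (rule sum.cong) auto
    then show ?thesis using assms by simp
  qed
  moreover have "(\<Sum>i\<in>UNIV. pd L p (dV i a) * (if i = j \<and> b = a then 1 else 0))
      = (if b = a then pd L p (dV j a) else 0)"
  proof -
    have "(\<Sum>i\<in>UNIV. pd L p (dV i a) * (if i = j \<and> b = a then 1 else 0))
        = (\<Sum>i\<in>UNIV. if i = j then (if b = a then pd L p (dV i a) else 0) else 0)"
      by (rule sum.cong) auto
    then show ?thesis by simp
  qed
  ultimately show ?thesis using assms by (simp add: dTheta_def sum_subtractf)
qed

lemma dTheta_horizontal_dQ:
  assumes "\<forall>c. jx B $ c = (if c = a then 1 else 0)"
  shows "dTheta L a p B (dQ j) = (\<Sum>i\<in>UNIV. pd2 L p (dQ j) (dV i a) * contact p B i) + pd L p (dQ j)"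
  using assms by (simp add: dTheta_def)

locale field_equation_at =
  fixes L :: "('k::finite, 'n::finite) jet \<Rightarrow> real"
    and X :: "'k \<Rightarrow> ('k, 'n) jet \<Rightarrow> ('k, 'n) jet"
    and W :: "('k, 'n) jet set"
    and p :: "('k, 'n) jet"
  assumes open_W: "open W" and p_in_W: "p \<in> W"
    and L_differentiable: "\<forall>y\<in>W. L differentiable (at y)"
    and pd_L_differentiable: "\<forall>u. (\<lambda>y. pd L y u) differentiable (at p)"
    and X_dx: "\<forall>a c. jx (X a p) $ c = (if c = a then 1 else 0)"
    and X_eq: "\<forall>Y. (\<Sum>a\<in>UNIV. Omega L a p (X a p) Y) = (real CARD('k) - 1) * pd L p Y"
begin

lemmas Omega_eq = Omega_eq_dTheta[OF open_W p_in_W L_differentiable pd_L_differentiable]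

lemma Hessian_annihilates_contact:
  "(\<Sum>a\<in>UNIV. \<Sum>i\<in>UNIV. pd2 L p (dV j b) (dV i a) * contact p (X a p) i) = 0"
proof -
  have "(\<Sum>a\<in>UNIV. Omega L a p (X a p) (dV j b))
      = (\<Sum>a\<in>UNIV. (\<Sum>i\<in>UNIV. pd2 L p (dV j b) (dV i a) * contact p (X a p) i)
           - (if b = a then pd L p (dV j a) else 0) + pd L p (dV j b))"
    using X_dx by (intro sum.cong) (simp_all add: Omega_eq dTheta_dV dTheta_horizontal_dV)
  also have "\<dots> = (\<Sum>a\<in>UNIV. \<Sum>i\<in>UNIV. pd2 L p (dV j b) (dV i a) * contact p (X a p) i)
       + (real CARD('k) - 1) * pd L p (dV j b)"
    by (simp add: sum.distrib sum_subtractf algebra_simps)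
  finally show ?thesis using X_eq by simp
qed

lemma contact_eq_zero_if_regular:
  assumes "regular_at L p"
  shows "contact p (X b p) i = 0"
proof -
  define M where "M = ((\<chi> ja. \<chi> ib. pd2 L p (dV (fst ja) (snd ja)) (dV (fst ib) (snd ib)))
        :: real^('n \<times> 'k)^('n \<times> 'k))"
  define v where "v = ((\<chi> ib. contact p (X (snd ib) p) (fst ib)) :: real^('n \<times> 'k))"
  have "M *v v = 0"
  proof (subst vec_eq_iff, intro allI)
    fix jb :: "'n \<times> 'k"
    obtain j b where jb: "jb = (j, b)" by (cases jb)
    have "(M *v v) $ jb = (\<Sum>ib\<in>UNIV \<times> UNIV.
        pd2 L p (dV j b) (dV (fst ib) (snd ib)) * contact p (X (snd ib) p) (fst ib))"
      by (simp add: matrix_vector_mult_def M_def v_def jb UNIV_Times_UNIV)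
    also have "\<dots> = (\<Sum>i\<in>UNIV. \<Sum>a\<in>UNIV. pd2 L p (dV j b) (dV i a) * contact p (X a p) i)"
      unfolding UNIV_Times_UNIV[symmetric] sum.cartesian_product by (simp add: case_prod_beta)
    also have "\<dots> = 0"
      using Hessian_annihilates_contact[of j b] by (subst sum.swap) simp
    finally show "(M *v v) $ jb = 0 $ jb" by simp
  qed
  moreover have "invertible M" using assms unfolding regular_at_def M_def invertible_det_nz .
  ultimately have "v = 0" by (metis inj_matrix_vector_mult injD matrix_vector_mult_0_right)
  then show ?thesis by (simp add: v_def vec_eq_iff)
qed

lemma euler_lagrange_along_field:
  assumes "\<forall>a i. contact p (X a p) i = 0"
  shows "(\<Sum>a\<in>UNIV. pd2 L p (X a p) (dV j a)) = pd L p (dQ j)"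
proof -
  have "(\<Sum>a\<in>UNIV. Omega L a p (X a p) (dQ j))
      = real CARD('k) * pd L p (dQ j) - (\<Sum>a\<in>UNIV. pd2 L p (X a p) (dV j a))"
    using X_dx assms by (simp add: Omega_eq dTheta_dQ dTheta_horizontal_dQ sum_subtractf)
  then show ?thesis using X_eq by (simp add: algebra_simps)
qed

end

lemma field_equation_atI:
  fixes L :: "('k::finite, 'n::finite) jet \<Rightarrow> real" and X :: "'k \<Rightarrow> ('k, 'n) jet \<Rightarrow> ('k, 'n) jet"
  assumes "open W" "smooth_on W L"
    and "\<forall>p\<in>W. \<forall>a b. jx (X b p) $ a = (if a = b then 1 else 0)"
    and "\<forall>p\<in>W. \<forall>Y. (\<Sum>a\<in>UNIV. Omega L a p (X a p) Y) = (real CARD('k) - 1) * pd L p Y"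
    and "p \<in> W"
  shows "field_equation_at L X W p"
  unfolding field_equation_at_def using assms smooth_on_differentiable[OF assms(1,2)] by auto

lemma SOPDE_on_if_regular:
  fixes L :: "('k::finite, 'n::finite) jet \<Rightarrow> real" and X :: "'k \<Rightarrow> ('k, 'n) jet \<Rightarrow> ('k, 'n) jet"
  assumes "open W" "smooth_on W L"
    and X_dx: "\<forall>p\<in>W. \<forall>a b. jx (X b p) $ a = (if a = b then 1 else 0)"
    and "\<forall>p\<in>W. \<forall>Y. (\<Sum>a\<in>UNIV. Omega L a p (X a p) Y) = (real CARD('k) - 1) * pd L p Y"
    and regular: "\<forall>p\<in>W. regular_at L p"
  shows "SOPDE_on W X"
  unfolding SOPDE_on_def
proof (intro ballI allI conjI)
  fix p b i assume "p \<in> W"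
  interpret field_equation_at L X W p using field_equation_atI[OF assms(1-4) \<open>p \<in> W\<close>] .
  show "jx (X b p) $ a = (if a = b then 1 else 0)" for a using X_dx \<open>p \<in> W\<close> by blast
  show "jq (X b p) $ i - (\<Sum>c\<in>UNIV. jv p $ i $ c * jx (X b p) $ c) = 0"
    using contact_eq_zero_if_regular regular \<open>p \<in> W\<close> by (simp add: contact_def)
qed

lemma j1_derivative:
  fixes \<phi> :: "real^'k::finite \<Rightarrow> real^'n::finite"
  assumes differentiable: "j1 \<phi> differentiable (at x)"
  defines "D \<equiv> frechet_derivative (j1 \<phi>) (at x)"
  shows "pd \<phi> x h = jq (D h)" "pd2 \<phi> x h (axis c 1) $ i = jv (D h) $ i $ c"
proof -
  have dD: "(j1 \<phi> has_derivative D) (at x)"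
    using differentiable unfolding D_def frechet_derivative_works .
  have "\<phi> = (\<lambda>y. jq (j1 \<phi> y))" by (simp add: j1_def jq_def)
  then have "(\<phi> has_derivative (\<lambda>h. jq (D h))) (at x)"
    using bounded_linear.has_derivative[OF bounded_linear_jq dD] by simp
  then show "pd \<phi> x h = jq (D h)" unfolding pd_def using frechet_derivative_at by metis
  have "(\<lambda>y. pd \<phi> y (axis c 1)) = (\<lambda>y. (\<chi> i. jv (j1 \<phi> y) $ i $ c))"
    by (simp add: j1_def jv_def vec_eq_iff)
  then have "((\<lambda>y. pd \<phi> y (axis c 1)) has_derivative (\<lambda>h. (\<chi> i. jv (D h) $ i $ c))) (at x)"
    using bounded_linear.has_derivative[OF bounded_linear_jv_column dD] by simp
  then have "pd2 \<phi> x h (axis c 1) = (\<chi> i. jv (D h) $ i $ c)"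
    unfolding pd2_def pd_def using frechet_derivative_at by metis
  then show "pd2 \<phi> x h (axis c 1) $ i = jv (D h) $ i $ c" by simp
qed

lemma contact_j1_eq_zero:
  assumes "\<forall>c. jx w $ c = (if c = a then 1 else 0)" and "jq w = pd \<phi> x (axis a 1)"
  shows "contact (j1 \<phi> x) w i = 0"
proof -
  have "(\<Sum>c\<in>UNIV. jv (j1 \<phi> x) $ i $ c * jx w $ c) = (\<Sum>c\<in>UNIV. if c = a then pd \<phi> x (axis c 1) $ i else 0)"
    using assms(1) by (intro sum.cong) (simp_all add: j1_def jv_def)
  then show ?thesis by (simp add: contact_def assms(2))
qed

lemma euler_lagrange_if_integral_section:
  fixes L :: "('k::finite, 'n::finite) jet \<Rightarrow> real" and \<phi> :: "real^'k \<Rightarrow> real^'n"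
  assumes W: "open W" and L_smooth: "smooth_on W L"
    and X_dx: "\<forall>p\<in>W. \<forall>a b. jx (X b p) $ a = (if a = b then 1 else 0)"
    and X_eq: "\<forall>p\<in>W. \<forall>Y. (\<Sum>a\<in>UNIV. Omega L a p (X a p) Y) = (real CARD('k) - 1) * pd L p Y"
    and integral: "integral_section X U (j1 \<phi>)" and image: "j1 \<phi> ` U \<subseteq> W"
  shows "euler_lagrange L U \<phi>"
  unfolding euler_lagrange_def
proof (intro ballI allI)
  fix x j assume "x \<in> U"
  define p where "p = j1 \<phi> x"
  have "p \<in> W" using image \<open>x \<in> U\<close> p_def by blast
  interpret field_equation_at L X W p using field_equation_atI[OF W L_smooth X_dx X_eq \<open>p \<in> W\<close>] .
  have dj: "j1 \<phi> differentiable (at x)"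
    and XD: "\<And>a. frechet_derivative (j1 \<phi>) (at x) (axis a 1) = X a p"
    using integral \<open>x \<in> U\<close> unfolding integral_section_def p_def by auto
  have Xq: "jq (X a p) = pd \<phi> x (axis a 1)" for a using j1_derivative(1)[OF dj] XD by metis
  have Xv: "jv (X a p) $ i $ c = pd2 \<phi> x (axis a 1) (axis c 1) $ i" for a i c
    using j1_derivative(2)[OF dj] XD by metis
  have "contact p (X a p) i = 0" for a i
    using contact_j1_eq_zero[of "X a p" a \<phi> x] X_dx Xq by (simp add: p_def)
  then have balance: "(\<Sum>a\<in>UNIV. pd2 L p (X a p) (dV j a)) = pd L p (dQ j)"
    by (simp add: euler_lagrange_along_field)
  have "linear (\<lambda>w. pd2 L p w (dV j a))" for a
    using pd_L_differentiable unfolding pd2_def pd_def by (blast intro: linear_frechet_derivative)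
  then have "pd2 L p (X a p) (dV j a) = pd2 L p (dX a) (dV j a)
     + (\<Sum>i\<in>UNIV. pd \<phi> x (axis a 1) $ i * pd2 L p (dQ i) (dV j a))
     + (\<Sum>c\<in>UNIV. \<Sum>i\<in>UNIV. pd2 \<phi> x (axis a 1) (axis c 1) $ i * pd2 L p (dV i c) (dV j a))" for a
    using linear_expansion_if_dx_eq_delta[of "\<lambda>w. pd2 L p w (dV j a)" "X a p" a] X_dx by (simp add: Xq Xv)
  then show "(\<Sum>a\<in>UNIV. pd2 L (j1 \<phi> x) (dX a) (dV j a))
    + (\<Sum>a\<in>UNIV. \<Sum>i\<in>UNIV. pd \<phi> x (axis a 1) $ i * pd2 L (j1 \<phi> x) (dQ i) (dV j a))
    + (\<Sum>a\<in>UNIV. \<Sum>b\<in>UNIV. \<Sum>i\<in>UNIV. pd2 \<phi> x (axis a 1) (axis b 1) $ i * pd2 L (j1 \<phi> x) (dV i b) (dV j a))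
    = pd L (j1 \<phi> x) (dQ j)"
    using balance by (simp add: sum.distrib p_def)
qed

theorem mainTheorem5:
  fixes L :: "('k::finite, 'n::finite) jet \<Rightarrow> real"
    and X :: "'k \<Rightarrow> ('k, 'n) jet \<Rightarrow> ('k, 'n) jet"
    and W :: "('k, 'n) jet set"
    and U0 :: "(real^'k) set"
    and \<phi> :: "real^'k \<Rightarrow> real^'n"
  assumes W: "open W"
    and L_smooth: "smooth_on W L"
    and X_smooth: "\<forall>a. smooth_on W (X a)"
    and X_dx: "\<forall>p\<in>W. \<forall>a b. jx (X b p) $ a = (if a = b then 1 else 0)"
    and X_eq: "\<forall>p\<in>W. \<forall>Y. (\<Sum>a\<in>UNIV. Omega L a p (X a p) Y) = (real CARD('k) - 1) * pd L p Y"
  shows "((\<forall>p\<in>W. regular_at L p) \<longrightarrow> SOPDE_on W X)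
       \<and> ((\<forall>p\<in>W. regular_at L p) \<longrightarrow> kvf_integrable W X \<longrightarrow> solution_of W X U0 \<phi>
            \<longrightarrow> euler_lagrange L U0 \<phi>)
       \<and> (kvf_integrable W X \<longrightarrow> integral_section X U0 (j1 \<phi>) \<longrightarrow> j1 \<phi> ` U0 \<subseteq> W
            \<longrightarrow> euler_lagrange L U0 \<phi>)"
proof (intro conjI impI)
  note euler_lagrange = euler_lagrange_if_integral_section[OF W L_smooth X_dx X_eq]
  show "SOPDE_on W X" if "\<forall>p\<in>W. regular_at L p"
    using SOPDE_on_if_regular[OF W L_smooth X_dx X_eq that] .
  show "euler_lagrange L U0 \<phi>" if "solution_of W X U0 \<phi>"
    using euler_lagrange that unfolding solution_of_def by blast
  show "euler_lagrange L U0 \<phi>" if "integral_section X U0 (j1 \<phi>)" "j1 \<phi> ` U0 \<subseteq> W"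
    using euler_lagrange that .
qed

end
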